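(* Let $K^2$ be the Klein bottle and $\mathcal X(K^2)=\mathrm{Hom}(\pi_1(K^2),\mathrm{SL}_2(\mathbb C))/\!/\mathrm{SL}_2(\mathbb C)$ its $\mathrm{SL}_2(\mathbb C)$-character variety. Then $\mathcal X(K^2)$ has three irreducible components. Exactly one of them contains characters of irreducible representations, and this component has dimension 1. *)

theory Defs
  imports "HOL-Analysis.Analysis"
begin

type_synonym pt3 = "complex \<times> complex \<times> complex"

inductive_set poly_fun3 :: "(pt3 \<Rightarrow> complex) set" where
  const: "(\<lambda>_. c) \<in> poly_fun3"
| var1: "(\<lambda>x. fst x) \<in> poly_fun3"
| var2: "(\<lambda>x. fst (snd x)) \<in> poly_fun3"
| var3: "(\<lambda>x. snd (snd x)) \<in> poly_fun3"
| add: "p \<in> poly_fun3 \<Longrightarrow> q \<in> poly_fun3 \<Longrightarrow> (\<lambda>x. p x + q x) \<in> poly_fun3"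
| mult: "p \<in> poly_fun3 \<Longrightarrow> q \<in> poly_fun3 \<Longrightarrow> (\<lambda>x. p x * q x) \<in> poly_fun3"

definition zariski_closed3 :: "pt3 set \<Rightarrow> bool" where
  "zariski_closed3 S \<longleftrightarrow> (\<exists>P \<subseteq> poly_fun3. S = {x. \<forall>p\<in>P. p x = 0})"

definition closed_in_var :: "pt3 set \<Rightarrow> pt3 set \<Rightarrow> bool" where
  "closed_in_var X Y \<longleftrightarrow> (\<exists>Z. zariski_closed3 Z \<and> Y = X \<inter> Z)"

definition irreducible_closed :: "pt3 set \<Rightarrow> pt3 set \<Rightarrow> bool" where
  "irreducible_closed X Y \<longleftrightarrow> closed_in_var X Y \<and> Y \<noteq> {} \<and>
     (\<forall>Y1 Y2. closed_in_var X Y1 \<longrightarrow> closed_in_var X Y2 \<longrightarrow> Y \<subseteq> Y1 \<union> Y2 \<longrightarrow>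
        Y \<subseteq> Y1 \<or> Y \<subseteq> Y2)"

definition irreducible_components :: "pt3 set \<Rightarrow> pt3 set set" where
  "irreducible_components X = {Y. irreducible_closed X Y \<and>
     (\<forall>Y'. irreducible_closed X Y' \<longrightarrow> Y \<subseteq> Y' \<longrightarrow> Y' = Y)}"

definition krull_dim :: "pt3 set \<Rightarrow> pt3 set \<Rightarrow> enat" where
  "krull_dim X Y = Sup {enat n | n. \<exists>C :: nat \<Rightarrow> pt3 set.
      (\<forall>i\<le>n. irreducible_closed X (C i) \<and> C i \<subseteq> Y) \<and> (\<forall>i<n. C i \<subset> C (Suc i))}"

type_synonym mat2 = "complex^2^2"

text \<open>Representations of \<pi>_1(K^2) = \<langle>a, b | a b a b^{-1} = 1\<rangle> into SL_2(C),
  given by the images (A, B) of the generators.\<close>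
definition klein_rep :: "mat2 \<Rightarrow> mat2 \<Rightarrow> bool" where
  "klein_rep A B \<longleftrightarrow> det A = 1 \<and> det B = 1 \<and> A ** B ** A ** matrix_inv B = mat 1"

text \<open>A representation generated by A, B is irreducible iff there is no common invariant line.\<close>
definition irreducible_pair :: "mat2 \<Rightarrow> mat2 \<Rightarrow> bool" where
  "irreducible_pair A B \<longleftrightarrow>
     \<not> (\<exists>v :: complex^2. v \<noteq> 0 \<and> (\<exists>c. A *v v = c *s v) \<and> (\<exists>d. B *v v = d *s v))"

text \<open>The character of the representation, as a point of X(F_2) = C^3 via the Fricke
  coordinates (tr A, tr B, tr AB).\<close>
definition char_pt :: "mat2 \<Rightarrow> mat2 \<Rightarrow> pt3" where
  "char_pt A B = (trace A, trace B, trace (A ** B))"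

definition klein_char_variety :: "pt3 set" where
  "klein_char_variety = {char_pt A B | A B. klein_rep A B}"

end

theory Submission
  imports Defs
begin

(* The relation A B A = B gives tr A tr B = 2 tr AB and tr A tr AB = 2 tr B, so in the
  Fricke coordinates (x, y, z) = (tr A, tr B, tr AB) the character variety lies on the three lines
  {y = z = 0}, {x = 2, z = y} and {x = -2, z = -y}; explicit representations show that it is their
  union. A line is a polynomial curve, so it meets a Zariski closed set either entirely or in
  finitely many points; hence each line is irreducible of Krull dimension 1, and the three
  pairwise incomparable lines are the irreducible components.
  If tr A = 2s with s = 1 or s = -1, then s is the only eigenvalue of A, and A B A = B makes B
  preserve the s-eigenspace of A: either A = sI, and any eigenline of B is invariant, or the
  eigenspace is a B-invariant line. So characters of irreducible representations lie only on the
  first line, which contains that of the quaternion representation a -> diag(i, -i),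
  b -> [[0, 1], [-1, 0]]. *)

definition matrix2 :: "'a::zero \<Rightarrow> 'a \<Rightarrow> 'a \<Rightarrow> 'a \<Rightarrow> 'a^2^2" where
  "matrix2 a b c d = vector [vector [a, b], vector [c, d]]"

definition vec2 :: "'a::zero \<Rightarrow> 'a \<Rightarrow> 'a^2" where
  "vec2 x y = vector [x, y]"

lemma matrix2_nth [simp]:
  "matrix2 a b c d $ 1 $ 1 = a" "matrix2 a b c d $ 1 $ 2 = b"
  "matrix2 a b c d $ 2 $ 1 = c" "matrix2 a b c d $ 2 $ 2 = d"
  by (simp_all add: matrix2_def)

lemma vec2_nth [simp]: "vec2 x y $ 1 = x" "vec2 x y $ 2 = y"
  by (simp_all add: vec2_def)

lemma matrix2_cases:
  obtains a b c d where "M = matrix2 a b c d"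
  using that[of "M$1$1" "M$1$2" "M$2$1" "M$2$2"] by (simp add: vec_eq_iff forall_2)

lemma vec2_cases:
  obtains x y where "v = vec2 x y"
  using that[of "v$1" "v$2"] by (simp add: vec_eq_iff forall_2)

lemma vec2_eq_0_iff [simp]: "vec2 x y = 0 \<longleftrightarrow> x = 0 \<and> y = 0"
  by (simp add: vec_eq_iff forall_2)

lemma matrix2_eq_0_iff: "matrix2 a b c d = 0 \<longleftrightarrow> a = 0 \<and> b = 0 \<and> c = 0 \<and> d = 0"
  by (simp add: vec_eq_iff forall_2)

lemma matrix2_eq_iff [simp]:
  "matrix2 a b c d = matrix2 a' b' c' d' \<longleftrightarrow> a = a' \<and> b = b' \<and> c = c' \<and> d = d'"
  by (simp add: vec_eq_iff forall_2)

lemma vec2_eq_iff [simp]: "vec2 x y = vec2 x' y' \<longleftrightarrow> x = x' \<and> y = y'"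
  by (simp add: vec_eq_iff forall_2)

lemma matrix2_mult [simp]:
  "matrix2 a b c d ** matrix2 a' b' c' d' =
     matrix2 (a*a' + b*c') (a*b' + b*d') (c*a' + d*c') (c*b' + d*d')"
  by (simp add: vec_eq_iff forall_2 matrix_matrix_mult_def sum_2)

lemma matrix2_mult_vec2 [simp]: "matrix2 a b c d *v vec2 x y = vec2 (a*x + b*y) (c*x + d*y)"
  by (simp add: vec_eq_iff forall_2 matrix_vector_mult_def sum_2)

lemma scale_vec2 [simp]: "k *s vec2 x y = vec2 (k*x) (k*y)"
  by (simp add: vec_eq_iff forall_2)

lemma matrix2_diff [simp]:
  "matrix2 a b c d - matrix2 a' b' c' d' = matrix2 (a - a') (b - b') (c - c') (d - d')"
  by (simp add: vec_eq_iff forall_2)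

lemma mat_eq_matrix2: "(mat k :: 'a::zero^2^2) = matrix2 k 0 0 k"
  by (simp add: vec_eq_iff forall_2 mat_def)

lemma det_matrix2 [simp]: "det (matrix2 a b c d) = a*d - b*c"
  by (simp add: det_2)

lemma trace_matrix2 [simp]: "trace (matrix2 a b c d) = a + d"
  by (simp add: trace_def sum_2)

lemma matrix_vector_mult_mat: "(mat k :: 'a::semiring_1^'n^'n) *v x = k *s x"
  by (simp add: vec_eq_iff matrix_vector_mult_def mat_def if_distrib if_distribR sum.delta
      cong del: if_weak_cong)

lemma matrix_inv_invertible:
  assumes "invertible A"
  shows "A ** matrix_inv A = mat 1" "matrix_inv A ** A = mat 1"
  using someI_ex[OF assms[unfolded invertible_def]] by (simp_all add: matrix_inv_def)

lemma det_diff_mat_2: "det (A - mat k) = k^2 - trace A * k + det (A :: 'a::comm_ring_1^2^2)"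
  by (cases A rule: matrix2_cases) (simp add: mat_eq_matrix2 algebra_simps power2_eq_square)

lemma eigenvector_if_det_diff_mat_eq_0:
  fixes A :: "'a::field^'n^'n"
  assumes "det (A - mat k) = 0"
  obtains v where "v \<noteq> 0" "A *v v = k *s v"
proof -
  have "\<not> invertible (A - mat k)" using assms invertible_det_nz by blast
  then obtain v where "v \<noteq> 0" "(A - mat k) *v v = 0"
    unfolding invertible_left_inverse matrix_left_invertible_ker by blast
  then show thesis
    using that by (simp add: matrix_vector_mult_diff_rdistrib matrix_vector_mult_mat)
qed

lemma complex_quadratic_root: "\<exists>k::complex. k^2 - p*k + q = 0"
proof
  let ?k = "(p + csqrt (p^2 - 4*q)) / 2"
  have "(csqrt (p^2 - 4*q))^2 = p^2 - 4*q" by simp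
  then show "?k^2 - p * ?k + q = 0"
    by (simp add: power2_eq_square field_simps) algebra
qed

lemma eigenvector_exists_2:
  fixes A :: "complex^2^2"
  obtains v k where "v \<noteq> 0" "A *v v = k *s v"
proof -
  obtain k where "k^2 - trace A * k + det A = 0" using complex_quadratic_root by blast
  then show thesis
    using that eigenvector_if_det_diff_mat_eq_0 det_diff_mat_2 by metis
qed

lemma kernel_parallel_2:
  fixes N :: "'a::field^2^2"
  assumes "N \<noteq> 0" "N *v v = 0" "N *v w = 0" "v \<noteq> 0"
  obtains c where "w = c *s v"
proof -
  obtain p q r s where N: "N = matrix2 p q r s" by (rule matrix2_cases)
  obtain v1 v2 where v: "v = vec2 v1 v2" by (rule vec2_cases)
  obtain w1 w2 where w: "w = vec2 w1 w2" by (rule vec2_cases)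
  have eqs: "p * v1 + q * v2 = 0" "r * v1 + s * v2 = 0" "p * w1 + q * w2 = 0" "r * w1 + s * w2 = 0"
    using assms(2,3) by (simp_all add: N v w)
  have "x * (v1 * w2 - v2 * w1) = 0" if "x \<in> {p, q, r, s}" for x
    using that eqs by auto algebra+
  moreover have "\<exists>x\<in>{p, q, r, s}. x \<noteq> 0" using assms(1) by (auto simp: N matrix2_eq_0_iff)
  ultimately have cross: "v1 * w2 = v2 * w1" by auto
  show thesis
  proof (cases "v1 = 0")
    case False
    with cross show thesis by (intro that[of "w1/v1"]) (simp add: v w field_simps)
  next
    case True
    with assms(4) cross show thesis by (intro that[of "w2/v2"]) (simp add: v w field_simps)
  qed
qed

lemma klein_rep_iff: "klein_rep A B \<longleftrightarrow> det A = 1 \<and> det B = 1 \<and> A ** B ** A = B"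
proof (cases "det B = 1")
  case True
  then have "invertible B" using invertible_det_nz by fastforce
  note B_inv = matrix_inv_invertible[OF this]
  have "A ** B ** A ** matrix_inv B = mat 1 \<longleftrightarrow> A ** B ** A = B"
  proof
    assume "A ** B ** A ** matrix_inv B = mat 1"
    then have "A ** B ** A ** matrix_inv B ** B = B" by simp
    then show "A ** B ** A = B" by (metis B_inv(2) matrix_mul_assoc matrix_mul_rid)
  qed (simp add: matrix_mul_assoc B_inv)
  then show ?thesis using True by (simp add: klein_rep_def)
qed (simp add: klein_rep_def)

lemma klein_rep_coords:
  assumes "klein_rep (matrix2 a b c d) (matrix2 e f g h)"
  shows "a*d - b*c = 1" "e*h - f*g = 1"
    "(a*e + b*g)*a + (a*f + b*h)*c = e" "(a*e + b*g)*b + (a*f + b*h)*d = f"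
    "(c*e + d*g)*a + (c*f + d*h)*c = g" "(c*e + d*g)*b + (c*f + d*h)*d = h"
  using assms by (simp_all add: klein_rep_iff)

lemma klein_rep_trace_relations:
  assumes "klein_rep A B"
  shows "trace A * trace (A ** B) = 2 * trace B" "trace A * trace B = 2 * trace (A ** B)"
proof -
  obtain a b c d where A: "A = matrix2 a b c d" by (rule matrix2_cases)
  obtain e f g h where B: "B = matrix2 e f g h" by (rule matrix2_cases)
  note rel = klein_rep_coords[OF assms[unfolded A B]]
  have "(a + d) * (a*e + b*g + c*f + d*h) = 2 * (e + h)" using rel by algebra
  moreover have "(a + d) * (e + h) = 2 * (a*e + b*g + c*f + d*h)" using rel by algebra
  ultimately show "trace A * trace (A ** B) = 2 * trace B" "trace A * trace B = 2 * trace (A ** B)"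
    by (simp_all add: A B algebra_simps)
qed

lemma klein_rep_eigenvector_image:
  assumes "klein_rep A B" "A *v v = s *s v" "s^2 = 1"
  shows "A *v (B *v v) = s *s (B *v v)"
proof -
  have "B *v v = (A ** B ** A) *v v"
    using assms(1) by (simp add: klein_rep_iff)
  also have "\<dots> = A *v (B *v (A *v v))"
    by (simp add: matrix_vector_mul_assoc matrix_mul_assoc)
  also have "\<dots> = s *s (A *v (B *v v))"
    by (simp add: assms(2) vector_scalar_commute)
  finally have "s *s (B *v v) = s^2 *s (A *v (B *v v))"
    by (metis power2_eq_square vector_smult_assoc)
  then show ?thesis using assms(3) by simp
qed

lemma irreducible_klein_rep_trace:
  assumes "klein_rep A B" "irreducible_pair A B"
  shows "trace A \<noteq> 2" "trace A \<noteq> -2"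
proof -
  have no_common_eigenvector: False if "v \<noteq> 0" "A *v v = k *s v" "B *v v = m *s v" for v k m
    using assms(2) that unfolding irreducible_pair_def by blast
  have "trace A \<noteq> 2 * s" if s: "s^2 = 1" for s
  proof
    assume tr: "trace A = 2 * s"
    have "det (A - mat s) = 0"
      using assms(1) s by (simp add: det_diff_mat_2 tr klein_rep_iff power2_eq_square)
    then obtain v where v: "v \<noteq> 0" "A *v v = s *s v"
      by (rule eigenvector_if_det_diff_mat_eq_0)
    show False
    proof (cases "A = mat s")
      case True
      obtain w m where "w \<noteq> 0" "B *v w = m *s w" by (rule eigenvector_exists_2)
      then show False using no_common_eigenvector True matrix_vector_mult_mat by metis
    next
      case False
      have "(A - mat s) *v v = 0" "(A - mat s) *v (B *v v) = 0"
        using v(2) klein_rep_eigenvector_image[OF assms(1) v(2) s]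
        by (simp_all add: matrix_vector_mult_diff_rdistrib matrix_vector_mult_mat)
      then obtain m where "B *v v = m *s v"
        using kernel_parallel_2[of "A - mat s" v "B *v v"] False v(1) by auto
      then show False using no_common_eigenvector v by blast
    qed
  qed
  from this[of 1] this[of "-1"] show "trace A \<noteq> 2" "trace A \<noteq> -2" by simp_all
qed

lemma poly_fun3_diff: "p \<in> poly_fun3 \<Longrightarrow> q \<in> poly_fun3 \<Longrightarrow> (\<lambda>x. p x - q x) \<in> poly_fun3"
  using poly_fun3.add[OF _ poly_fun3.mult[OF poly_fun3.const[of "-1"]], of p q] by simp

lemma zariski_closed3_zero_set: "p \<in> poly_fun3 \<Longrightarrow> zariski_closed3 {x. p x = 0}"
  unfolding zariski_closed3_def by (intro exI[of _ "{p}"]) auto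

lemma zariski_closed3_Int:
  assumes "zariski_closed3 Z1" "zariski_closed3 Z2"
  shows "zariski_closed3 (Z1 \<inter> Z2)"
proof -
  obtain P1 P2 where "P1 \<subseteq> poly_fun3" "Z1 = {x. \<forall>p\<in>P1. p x = 0}"
    "P2 \<subseteq> poly_fun3" "Z2 = {x. \<forall>p\<in>P2. p x = 0}"
    using assms unfolding zariski_closed3_def by blast
  then show ?thesis unfolding zariski_closed3_def by (intro exI[of _ "P1 \<union> P2"]) auto
qed

text \<open>The union is cut out by the pairwise products of the defining polynomials.\<close>
lemma zariski_closed3_Un:
  assumes "zariski_closed3 Z1" "zariski_closed3 Z2"
  shows "zariski_closed3 (Z1 \<union> Z2)"
proof -
  obtain P1 P2 where P: "P1 \<subseteq> poly_fun3" "Z1 = {x. \<forall>p\<in>P1. p x = 0}"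
    "P2 \<subseteq> poly_fun3" "Z2 = {x. \<forall>p\<in>P2. p x = 0}"
    using assms unfolding zariski_closed3_def by blast
  define P where "P = (\<lambda>(p, q) x. p x * q x) ` (P1 \<times> P2)"
  have "P \<subseteq> poly_fun3" using P(1,3) by (auto simp: P_def intro: poly_fun3.mult)
  moreover have "x \<in> Z1 \<union> Z2 \<longleftrightarrow> (\<forall>r\<in>P. r x = 0)" for x
  proof -
    have "(\<forall>r\<in>P. r x = 0) \<longleftrightarrow> (\<forall>p\<in>P1. \<forall>q\<in>P2. p x = 0 \<or> q x = 0)"
      by (auto simp: P_def)
    also have "\<dots> \<longleftrightarrow> x \<in> Z1 \<union> Z2"
      using P(2,4) by blast
    finally show ?thesis by simp
  qed
  ultimately show ?thesis unfolding zariski_closed3_def by blast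
qed

lemma zariski_closed3_empty: "zariski_closed3 {}"
  using zariski_closed3_zero_set[OF poly_fun3.const[of 1]] by simp

lemma zariski_closed3_singleton: "zariski_closed3 {(a1, a2, a3)}"
proof -
  have "{(a1, a2, a3)} =
      {x. fst x - a1 = 0} \<inter> {x. fst (snd x) - a2 = 0} \<inter> {x. snd (snd x) - a3 = 0}"
    by (auto simp: prod_eq_iff)
  then show ?thesis
    by (simp only:)
      (intro zariski_closed3_Int zariski_closed3_zero_set poly_fun3_diff poly_fun3.intros)
qed

lemma zariski_closed3_finite: "finite S \<Longrightarrow> zariski_closed3 S"
proof (induction S rule: finite_induct)
  case (insert a S)
  obtain a1 a2 a3 where "a = (a1, a2, a3)" by (cases a)
  then have "insert a S = {(a1, a2, a3)} \<union> S" by blast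
  then show ?case using zariski_closed3_Un[OF zariski_closed3_singleton insert.IH] by (simp only:)
qed (rule zariski_closed3_empty)

lemma closed_in_var_subset: "closed_in_var X Y \<Longrightarrow> Y \<subseteq> X"
  unfolding closed_in_var_def by blast

lemma closed_in_var_zariski: "zariski_closed3 Y \<Longrightarrow> Y \<subseteq> X \<Longrightarrow> closed_in_var X Y"
  unfolding closed_in_var_def by blast

lemma closed_in_var_Un:
  "closed_in_var X Y1 \<Longrightarrow> closed_in_var X Y2 \<Longrightarrow> closed_in_var X (Y1 \<union> Y2)"
  unfolding closed_in_var_def by (auto simp flip: Int_Un_distrib intro: zariski_closed3_Un)

lemma closed_in_var_Union:
  "finite S \<Longrightarrow> (\<And>Y. Y \<in> S \<Longrightarrow> closed_in_var X Y) \<Longrightarrow> closed_in_var X (\<Union>S)"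
  by (induction S rule: finite_induct)
    (auto intro: closed_in_var_Un closed_in_var_zariski zariski_closed3_empty)

lemma irreducible_closed_subset_Union:
  assumes "finite S" "\<And>Z. Z \<in> S \<Longrightarrow> closed_in_var X Z" "irreducible_closed X Y" "Y \<subseteq> \<Union>S"
  shows "\<exists>Z\<in>S. Y \<subseteq> Z"
  using assms
proof (induction S rule: finite_induct)
  case empty
  then show ?case by (simp add: irreducible_closed_def)
next
  case (insert Z S)
  have "Y \<subseteq> Z \<or> Y \<subseteq> \<Union>S"
    using insert.prems insert.hyps(1) closed_in_var_Union[of S X]
    unfolding irreducible_closed_def by simp
  then show ?case using insert by blast
qed

lemma irreducible_components_eqI:
  assumes "finite S" "\<And>Z. Z \<in> S \<Longrightarrow> irreducible_closed X Z" "X = \<Union>S"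
    and incomparable: "\<And>Z Z'. Z \<in> S \<Longrightarrow> Z' \<in> S \<Longrightarrow> Z \<subseteq> Z' \<Longrightarrow> Z = Z'"
  shows "irreducible_components X = S"
proof -
  have in_member: "\<exists>Z\<in>S. Y \<subseteq> Z" if Y: "irreducible_closed X Y" for Y
  proof (rule irreducible_closed_subset_Union[OF assms(1) _ Y])
    show "closed_in_var X Z" if "Z \<in> S" for Z
      using assms(2)[OF that] by (simp add: irreducible_closed_def)
    show "Y \<subseteq> \<Union>S"
      using Y closed_in_var_subset assms(3) by (auto simp: irreducible_closed_def)
  qed
  show ?thesis
  proof (intro set_eqI iffI)
    fix Y assume "Y \<in> irreducible_components X"
    then have "irreducible_closed X Y" "\<And>Y'. irreducible_closed X Y' \<Longrightarrow> Y \<subseteq> Y' \<Longrightarrow> Y' = Y"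
      unfolding irreducible_components_def by auto
    then show "Y \<in> S" using in_member assms(2) by metis
  next
    fix Z assume Z: "Z \<in> S"
    have "Y' = Z" if Y': "irreducible_closed X Y'" "Z \<subseteq> Y'" for Y'
    proof -
      obtain Z' where "Z' \<in> S" "Y' \<subseteq> Z'" using in_member[OF Y'(1)] by blast
      with Z Y'(2) incomparable[of Z Z'] show "Y' = Z" by blast
    qed
    then show "Z \<in> irreducible_components X"
      using assms(2)[OF Z] unfolding irreducible_components_def by blast
  qed
qed

lemma irreducible_closed_singleton: "a \<in> X \<Longrightarrow> irreducible_closed X {a}"
  unfolding irreducible_closed_def
  by (cases a) (auto intro: closed_in_var_zariski zariski_closed3_singleton)

lemma irreducible_closed_finite:
  assumes "finite C" "irreducible_closed X C"
  obtains a where "C = {a}"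
proof -
  obtain a where a: "a \<in> C" using assms(2) unfolding irreducible_closed_def by blast
  have "C \<subseteq> X" using assms(2) closed_in_var_subset unfolding irreducible_closed_def by blast
  then have "closed_in_var X {a}" "closed_in_var X (C - {a})"
    using a assms(1) by (auto intro!: closed_in_var_zariski zariski_closed3_finite)
  then have "C \<subseteq> {a} \<or> C \<subseteq> C - {a}"
    using assms(2) unfolding irreducible_closed_def by blast
  then show thesis using a that by blast
qed

definition polynomial_curve :: "(complex \<Rightarrow> pt3) \<Rightarrow> bool" where
  "polynomial_curve \<gamma> \<longleftrightarrow> (\<forall>p\<in>poly_fun3. \<exists>q. \<forall>t. p (\<gamma> t) = poly q t)"

lemma polynomial_curveI:
  assumes "\<And>t. \<gamma> t = (poly q1 t, poly q2 t, poly q3 t)"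
  shows "polynomial_curve \<gamma>"
  unfolding polynomial_curve_def
proof
  fix p assume "p \<in> poly_fun3"
  then show "\<exists>q. \<forall>t. p (\<gamma> t) = poly q t"
  proof induction
    case (const c)
    show ?case by (intro exI[of _ "[:c:]"]) simp
  next
    case (add p p')
    then obtain q q' where "\<forall>t. p (\<gamma> t) = poly q t" "\<forall>t. p' (\<gamma> t) = poly q' t" by blast
    then show ?case by (intro exI[of _ "q + q'"]) simp
  next
    case (mult p p')
    then obtain q q' where "\<forall>t. p (\<gamma> t) = poly q t" "\<forall>t. p' (\<gamma> t) = poly q' t" by blast
    then show ?case by (intro exI[of _ "q * q'"]) simp
  qed (use assms in auto)
qed

lemma polynomial_curve_preimage:
  assumes "polynomial_curve \<gamma>" "zariski_closed3 Z"
  shows "range \<gamma> \<subseteq> Z \<or> finite {t. \<gamma> t \<in> Z}"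
proof (rule disjCI)
  assume "\<not> finite {t. \<gamma> t \<in> Z}"
  obtain P where P: "P \<subseteq> poly_fun3" "Z = {x. \<forall>p\<in>P. p x = 0}"
    using assms(2) unfolding zariski_closed3_def by blast
  show "range \<gamma> \<subseteq> Z"
  proof (rule ccontr)
    assume "\<not> range \<gamma> \<subseteq> Z"
    then obtain t0 where "\<gamma> t0 \<notin> Z" by blast
    then obtain p where p: "p \<in> P" "p (\<gamma> t0) \<noteq> 0" using P(2) by blast
    obtain q where q: "\<forall>t. p (\<gamma> t) = poly q t"
      using assms(1) p(1) P(1) unfolding polynomial_curve_def by blast
    have "q \<noteq> 0" using p q by auto
    then have "finite {t. poly q t = 0}" by (rule poly_roots_finite)
    moreover have "{t. \<gamma> t \<in> Z} \<subseteq> {t. poly q t = 0}" using P(2) p q by auto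
    ultimately show False using \<open>\<not> finite {t. \<gamma> t \<in> Z}\<close> finite_subset by blast
  qed
qed

lemma irreducible_closed_polynomial_curve:
  assumes "polynomial_curve \<gamma>" "zariski_closed3 (range \<gamma>)" "range \<gamma> \<subseteq> X"
  shows "irreducible_closed X (range \<gamma>)"
  unfolding irreducible_closed_def
proof (intro conjI allI impI)
  show "closed_in_var X (range \<gamma>)" using assms(2,3) by (rule closed_in_var_zariski)
  show "range \<gamma> \<noteq> {}" by simp
  fix Y1 Y2 assume Y: "closed_in_var X Y1" "closed_in_var X Y2" "range \<gamma> \<subseteq> Y1 \<union> Y2"
  obtain Z1 Z2 where Z: "zariski_closed3 Z1" "Y1 = X \<inter> Z1" "zariski_closed3 Z2" "Y2 = X \<inter> Z2"
    using Y(1,2) unfolding closed_in_var_def by blast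
  have "{t. \<gamma> t \<in> Z1} \<union> {t. \<gamma> t \<in> Z2} = UNIV" using Y(3) Z by auto
  then have "\<not> (finite {t. \<gamma> t \<in> Z1} \<and> finite {t. \<gamma> t \<in> Z2})"
    by (metis finite_Un infinite_UNIV_char_0)
  then have "range \<gamma> \<subseteq> Z1 \<or> range \<gamma> \<subseteq> Z2"
    using polynomial_curve_preimage[OF assms(1)] Z(1,3) by blast
  then show "range \<gamma> \<subseteq> Y1 \<or> range \<gamma> \<subseteq> Y2" using Z(2,4) assms(3) by blast
qed

lemma irreducible_closed_psubset_polynomial_curve:
  assumes "polynomial_curve \<gamma>" "range \<gamma> \<subseteq> X" "irreducible_closed X C" "C \<subset> range \<gamma>"
  obtains a where "C = {a}"
proof -
  obtain Z where Z: "zariski_closed3 Z" "C = X \<inter> Z"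
    using assms(3) unfolding irreducible_closed_def closed_in_var_def by blast
  have "\<not> range \<gamma> \<subseteq> Z" using assms(2,4) Z(2) by blast
  then have "finite {t. \<gamma> t \<in> Z}" using polynomial_curve_preimage[OF assms(1) Z(1)] by blast
  moreover have "C \<subseteq> \<gamma> ` {t. \<gamma> t \<in> Z}" using assms(4) Z(2) by auto
  ultimately have "finite C" using finite_subset by blast
  then show thesis using irreducible_closed_finite assms(3) that by blast
qed

lemma krull_dim_polynomial_curve:
  assumes "polynomial_curve \<gamma>" "zariski_closed3 (range \<gamma>)" "range \<gamma> \<subseteq> X" "\<gamma> s \<noteq> \<gamma> t"
  shows "krull_dim X (range \<gamma>) = 1"
proof -
  define chain_lengths where "chain_lengths = {enat n | n. \<exists>C :: nat \<Rightarrow> pt3 set.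
    (\<forall>i\<le>n. irreducible_closed X (C i) \<and> C i \<subseteq> range \<gamma>) \<and> (\<forall>i<n. C i \<subset> C (Suc i))}"
  have "m \<le> 1" if m_chain: "m \<in> chain_lengths" for m
  proof -
    obtain n C where m: "m = enat n"
      and C: "\<forall>i\<le>n. irreducible_closed X (C i) \<and> C i \<subseteq> range \<gamma>" "\<forall>i<n. C i \<subset> C (Suc i)"
      using m_chain by (auto simp: chain_lengths_def)
    have "n \<le> 1"
    proof (rule ccontr)
      assume "\<not> n \<le> 1"
      then have "0 < n" "1 < n" "2 \<le> n" by simp_all
      then have "C 0 \<subset> C 1" "C 1 \<subset> C 2" "C 2 \<subseteq> range \<gamma>"
        "irreducible_closed X (C 0)" "irreducible_closed X (C 1)"
        using C by (simp_all add: numeral_2_eq_2)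
      then obtain a where "C 1 = {a}"
        using irreducible_closed_psubset_polynomial_curve[OF assms(1,3)]
        by (meson psubset_subset_trans)
      with \<open>C 0 \<subset> C 1\<close> \<open>irreducible_closed X (C 0)\<close> show False
        by (auto simp: irreducible_closed_def subset_singleton_iff)
    qed
    then show ?thesis using m by (simp add: one_enat_def)
  qed
  then have "Sup chain_lengths \<le> 1" by (rule Sup_least)
  moreover have "1 \<in> chain_lengths"
  proof -
    define C where "C i = (if i = 0 then {\<gamma> s} else range \<gamma>)" for i :: nat
    have "\<gamma> t \<in> range \<gamma> - {\<gamma> s}" using assms(4) by simp
    then have "C 0 \<subset> C 1" by (auto simp: C_def)
    moreover have "irreducible_closed X (C 0)"
      using assms(3) by (auto simp: C_def intro: irreducible_closed_singleton)
    moreover have "irreducible_closed X (C 1)"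
      unfolding C_def by (simp add: irreducible_closed_polynomial_curve[OF assms(1-3)])
    moreover have "C 0 \<subseteq> range \<gamma>" "C 1 \<subseteq> range \<gamma>" by (simp_all add: C_def)
    ultimately have "(\<forall>i\<le>1. irreducible_closed X (C i) \<and> C i \<subseteq> range \<gamma>) \<and>
        (\<forall>i<1. C i \<subset> C (Suc i))"
      by (auto simp: le_Suc_eq One_nat_def)
    then show ?thesis unfolding chain_lengths_def one_enat_def by blast
  qed
  then have "1 \<le> Sup chain_lengths" by (rule Sup_upper)
  ultimately show ?thesis unfolding krull_dim_def chain_lengths_def by (rule antisym)
qed

definition klein_line_zero :: "pt3 set" where
  "klein_line_zero = range (\<lambda>t. (t, 0, 0))"

definition klein_line_plus :: "pt3 set" where
  "klein_line_plus = range (\<lambda>t. (2, t, t))"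

definition klein_line_minus :: "pt3 set" where
  "klein_line_minus = range (\<lambda>t. (-2, t, -t))"

lemma mem_klein_line_zero: "(x, y, z) \<in> klein_line_zero \<longleftrightarrow> y = 0 \<and> z = 0"
  by (auto simp: klein_line_zero_def)

lemma mem_klein_line_plus: "(x, y, z) \<in> klein_line_plus \<longleftrightarrow> x = 2 \<and> z = y"
  by (auto simp: klein_line_plus_def)

lemma mem_klein_line_minus: "(x, y, z) \<in> klein_line_minus \<longleftrightarrow> x = -2 \<and> z = -y"
  by (auto simp: klein_line_minus_def)

lemma polynomial_curve_klein_lines:
  "polynomial_curve (\<lambda>t. (t, 0, 0))" "polynomial_curve (\<lambda>t. (2, t, t))"
  "polynomial_curve (\<lambda>t. (-2, t, -t))"
proof -
  show "polynomial_curve (\<lambda>t. (t, 0, 0))"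
    by (rule polynomial_curveI[of _ "[:0, 1:]" 0 0]) simp
  show "polynomial_curve (\<lambda>t. (2, t, t))"
    by (rule polynomial_curveI[of _ "[:2:]" "[:0, 1:]" "[:0, 1:]"]) simp
  show "polynomial_curve (\<lambda>t. (-2, t, -t))"
    by (rule polynomial_curveI[of _ "[:-2:]" "[:0, 1:]" "[:0, -1:]"]) simp
qed

lemma zariski_closed3_klein_lines:
  "zariski_closed3 klein_line_zero" "zariski_closed3 klein_line_plus"
  "zariski_closed3 klein_line_minus"
proof -
  have zero: "klein_line_zero = {x. fst (snd x) = 0} \<inter> {x. snd (snd x) = 0}"
    by (auto simp: klein_line_zero_def)
  show "zariski_closed3 klein_line_zero" unfolding zero
    by (intro zariski_closed3_Int zariski_closed3_zero_set poly_fun3.intros)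
  have plus: "klein_line_plus = {x. fst x - 2 = 0} \<inter> {x. fst (snd x) - snd (snd x) = 0}"
    by (auto simp: klein_line_plus_def)
  show "zariski_closed3 klein_line_plus" unfolding plus
    by (intro zariski_closed3_Int zariski_closed3_zero_set poly_fun3_diff poly_fun3.intros)
  have minus: "klein_line_minus = {x. fst x + 2 = 0} \<inter> {x. fst (snd x) + snd (snd x) = 0}"
    by (auto simp: klein_line_minus_def add_eq_0_iff2)
  show "zariski_closed3 klein_line_minus" unfolding minus
    by (intro zariski_closed3_Int zariski_closed3_zero_set poly_fun3.intros)
qed

lemma klein_char_variety_subset:
  "klein_char_variety \<subseteq> klein_line_zero \<union> klein_line_plus \<union> klein_line_minus"
proof
  fix p assume "p \<in> klein_char_variety"
  then obtain A B where AB: "klein_rep A B" "p = char_pt A B"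
    unfolding klein_char_variety_def by blast
  define x y z where "x = trace A" "y = trace B" "z = trace (A ** B)"
  have rel: "x * z = 2 * y" "x * y = 2 * z"
    using klein_rep_trace_relations[OF AB(1)] by (simp_all add: x_y_z_def)
  have "(x - 2) * (x + 2) * y = 0" "(x - 2) * (x + 2) * z = 0" using rel by algebra+
  then have "x = 2 \<and> z = y \<or> x = -2 \<and> z = -y \<or> y = 0 \<and> z = 0"
    using rel by (auto simp: add_eq_0_iff2)
  then show "p \<in> klein_line_zero \<union> klein_line_plus \<union> klein_line_minus"
    using AB(2) by (auto simp: char_pt_def x_y_z_def mem_klein_line_zero mem_klein_line_plus
        mem_klein_line_minus)
qed

lemma char_pt_in_klein_char_variety: "klein_rep A B \<Longrightarrow> char_pt A B \<in> klein_char_variety"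
  unfolding klein_char_variety_def by blast

lemma klein_lines_subset_char_variety:
  "klein_line_zero \<union> klein_line_plus \<union> klein_line_minus \<subseteq> klein_char_variety"
proof (intro Un_least subsetI)
  fix p assume "p \<in> klein_line_zero"
  then obtain x where p: "p = (x, 0, 0)" by (auto simp: klein_line_zero_def)
  obtain l where l: "l^2 - x * l + 1 = 0" using complex_quadratic_root by blast
  then have "l \<noteq> 0" by auto
  with l have "klein_rep (matrix2 l 0 0 (1/l)) (matrix2 0 1 (-1) 0)"
    "char_pt (matrix2 l 0 0 (1/l)) (matrix2 0 1 (-1) 0) = p"
    by (simp_all add: klein_rep_iff char_pt_def p field_simps power2_eq_square)
  then show "p \<in> klein_char_variety" by (metis char_pt_in_klein_char_variety)
next
  fix p assume "p \<in> klein_line_plus"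
  then obtain y where p: "p = (2, y, y)" by (auto simp: klein_line_plus_def)
  have "klein_rep (matrix2 1 0 0 1) (matrix2 y (-1) 1 0)"
    "char_pt (matrix2 1 0 0 1) (matrix2 y (-1) 1 0) = p"
    by (simp_all add: klein_rep_iff char_pt_def p)
  then show "p \<in> klein_char_variety" by (metis char_pt_in_klein_char_variety)
next
  fix p assume "p \<in> klein_line_minus"
  then obtain y where p: "p = (-2, y, -y)" by (auto simp: klein_line_minus_def)
  have "klein_rep (matrix2 (-1) 0 0 (-1)) (matrix2 y (-1) 1 0)"
    "char_pt (matrix2 (-1) 0 0 (-1)) (matrix2 y (-1) 1 0) = p"
    by (simp_all add: klein_rep_iff char_pt_def p)
  then show "p \<in> klein_char_variety" by (metis char_pt_in_klein_char_variety)
qed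

lemma klein_char_variety_eq:
  "klein_char_variety = klein_line_zero \<union> klein_line_plus \<union> klein_line_minus"
  using klein_char_variety_subset klein_lines_subset_char_variety by (rule subset_antisym)

lemma irreducible_closed_klein_lines:
  "irreducible_closed klein_char_variety klein_line_zero"
  "irreducible_closed klein_char_variety klein_line_plus"
  "irreducible_closed klein_char_variety klein_line_minus"
proof -
  have "klein_line_zero \<subseteq> klein_char_variety" "klein_line_plus \<subseteq> klein_char_variety"
    "klein_line_minus \<subseteq> klein_char_variety"
    by (auto simp: klein_char_variety_eq)
  note sub = this[unfolded klein_line_zero_def klein_line_plus_def klein_line_minus_def]
  note closed = zariski_closed3_klein_lines[unfolded klein_line_zero_def klein_line_plus_def
      klein_line_minus_def]
  show "irreducible_closed klein_char_variety klein_line_zero"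
    "irreducible_closed klein_char_variety klein_line_plus"
    "irreducible_closed klein_char_variety klein_line_minus"
    unfolding klein_line_zero_def klein_line_plus_def klein_line_minus_def
    by (rule irreducible_closed_polynomial_curve[OF polynomial_curve_klein_lines(1) closed(1) sub(1)]
          irreducible_closed_polynomial_curve[OF polynomial_curve_klein_lines(2) closed(2) sub(2)]
          irreducible_closed_polynomial_curve[OF polynomial_curve_klein_lines(3) closed(3) sub(3)])+
qed

lemma klein_lines_witnesses:
  "(0, 0, 0) \<in> klein_line_zero" "(0, 0, 0) \<notin> klein_line_plus"
  "(0, 0, 0) \<notin> klein_line_minus" "(2, 1, 1) \<in> klein_line_plus"
  "(2, 1, 1) \<notin> klein_line_zero" "(2, 1, 1) \<notin> klein_line_minus"
  "(-2, 1, -1) \<in> klein_line_minus" "(-2, 1, -1) \<notin> klein_line_zero"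
  "(-2, 1, -1) \<notin> klein_line_plus"
  by (simp_all add: mem_klein_line_zero mem_klein_line_plus mem_klein_line_minus)

lemma irreducible_components_klein_char_variety:
  "irreducible_components klein_char_variety = {klein_line_zero, klein_line_plus, klein_line_minus}"
proof (rule irreducible_components_eqI)
  show "Z = Z'" if "Z \<in> {klein_line_zero, klein_line_plus, klein_line_minus}"
    "Z' \<in> {klein_line_zero, klein_line_plus, klein_line_minus}" "Z \<subseteq> Z'" for Z Z'
    using that klein_lines_witnesses by blast
qed (use irreducible_closed_klein_lines klein_char_variety_eq in auto)

lemma card_irreducible_components_klein_char_variety:
  "card (irreducible_components klein_char_variety) = 3"
proof -
  have "klein_line_zero \<noteq> klein_line_plus" "klein_line_zero \<noteq> klein_line_minus"
    "klein_line_plus \<noteq> klein_line_minus"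
    using klein_lines_witnesses by blast+
  then show ?thesis unfolding irreducible_components_klein_char_variety by simp
qed

lemma irreducible_klein_rep_component:
  assumes "Y \<in> irreducible_components klein_char_variety" "klein_rep A B" "irreducible_pair A B"
    "char_pt A B \<in> Y"
  shows "Y = klein_line_zero"
proof -
  have "char_pt A B \<notin> klein_line_plus \<union> klein_line_minus"
    using irreducible_klein_rep_trace[OF assms(2,3)]
    by (simp add: char_pt_def mem_klein_line_plus mem_klein_line_minus)
  with assms(1,4) show ?thesis unfolding irreducible_components_klein_char_variety by blast
qed

lemma irreducible_klein_rep_exists:
  "\<exists>A B. klein_rep A B \<and> irreducible_pair A B \<and> char_pt A B \<in> klein_line_zero"
proof (intro exI conjI)
  let ?A = "matrix2 \<i> 0 0 (-\<i>)" and ?B = "matrix2 0 1 (-1) 0 :: complex^2^2"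
  show "klein_rep ?A ?B" by (simp add: klein_rep_iff)
  show "char_pt ?A ?B \<in> klein_line_zero" by (simp add: char_pt_def mem_klein_line_zero)
  show "irreducible_pair ?A ?B"
    unfolding irreducible_pair_def
  proof clarify
    fix v c d assume v: "v \<noteq> 0" "?A *v v = c *s v" "?B *v v = d *s v"
    obtain u1 u2 where u: "v = vec2 u1 u2" by (rule vec2_cases)
    have eqs: "\<i> * u1 = c * u1" "- \<i> * u2 = c * u2" "u2 = d * u1" "- u1 = d * u2"
      using v(2,3) by (simp_all add: u)
    then have "u1 \<noteq> 0" "u2 \<noteq> 0" using v(1) u by auto
    with eqs have "c = \<i>" "c = -\<i>" by simp_all
    then show False by simp
  qed
qed

lemma krull_dim_klein_line_zero: "krull_dim klein_char_variety klein_line_zero = 1"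
  unfolding klein_line_zero_def
proof (rule krull_dim_polynomial_curve[where s = 0 and t = 1])
  show "range (\<lambda>t. (t, 0, 0)) \<subseteq> klein_char_variety"
    using klein_char_variety_eq klein_line_zero_def by blast
qed (use polynomial_curve_klein_lines(1) zariski_closed3_klein_lines(1) klein_line_zero_def
    in auto)

theorem corollary4p2:
  shows "card (irreducible_components klein_char_variety) = 3 \<and>
    (\<exists>!Y. Y \<in> irreducible_components klein_char_variety \<and>
        (\<exists>A B. klein_rep A B \<and> irreducible_pair A B \<and> char_pt A B \<in> Y)) \<and>
    (\<forall>Y \<in> irreducible_components klein_char_variety.
        (\<exists>A B. klein_rep A B \<and> irreducible_pair A B \<and> char_pt A B \<in> Y) \<longrightarrow>
        krull_dim klein_char_variety Y = 1)"
proof -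
  let ?has_irreducible = "\<lambda>Y. \<exists>A B. klein_rep A B \<and> irreducible_pair A B \<and> char_pt A B \<in> Y"
  have only_zero_line: "Y = klein_line_zero"
    if "Y \<in> irreducible_components klein_char_variety" "?has_irreducible Y" for Y
    using that irreducible_klein_rep_component by blast
  have "klein_line_zero \<in> irreducible_components klein_char_variety"
    by (simp add: irreducible_components_klein_char_variety)
  then have "\<exists>!Y. Y \<in> irreducible_components klein_char_variety \<and> ?has_irreducible Y"
    using irreducible_klein_rep_exists only_zero_line by (intro ex1I[of _ klein_line_zero]) blast+
  moreover have "krull_dim klein_char_variety Y = 1"
    if "Y \<in> irreducible_components klein_char_variety" "?has_irreducible Y" for Y
    using only_zero_line[OF that] krull_dim_klein_line_zero by simp
  ultimately show ?thesis using card_irreducible_components_klein_char_variety by blast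
qed

end
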